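(* Let $n\ge 2$ be an integer and let $M$ be a countable dense subset of $(L_n,\tau_E|_{L_n})$. Then (1) $(X_n,\tau(M))$ is neither perfect nor Lindelöf; (2) $(X_n,\tau(L_n\setminus M))$ is second-countable but not $\sigma$-compact.
   Context: For $\overline{x},\overline{a}\in\mathbb R^n$ let $|\overline{x}-\overline{a}|$ be the Euclidean distance and $B(\overline{a},\epsilon)=\{\overline{x}\in\mathbb R^n:|\overline{x}-\overline{a}|<\epsilon\}$. Let $P_n=\{\overline{x}\in\mathbb R^n: x_n>0\}$, $L_n=\{\overline{x}\in\mathbb R^n: x_n=0\}$, $X_n=P_n\cup L_n$, and let $\tau_E$ denote the Euclidean topology on $X_n$. For $\overline{a}\in L_n$ and $\epsilon>0$ put $\overline{a(\epsilon)}=(a_1,\dots,a_{n-1},\epsilon)$ and $\tilde B(\overline{a},\epsilon)=\{\overline{a}\}\cup B(\overline{a(\epsilon)},\epsilon)$. For $A\subseteq L_n$, the topology $\tau(A)$ on $X_n$ is generated by the local bases: at $\overline{a}\in P_n$, the sets $B(\overline{a},\epsilon)$ with $0<\epsilon<a_n$; at $\overline{a}\in A$, the sets $B(\overline{a},\epsilon)\cap X_n$ with $\epsilon>0$; at $\overline{a}\in L_n\setminus A$, the sets $\tilde B(\overline{a},\epsilon)$ with $\epsilon>0$. A space is perfect if every closed set is a $G_\delta$-set. *)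

theory Defs
  imports "HOL-Analysis.Analysis"
begin

(* R^n is represented as R^(n-1) x R, i.e. the type (real^'m) \<times> real with
   n - 1 = CARD('m) \<ge> 1 (so n \<ge> 2).  The norm on the product type is
   sqrt(|y|^2 + t^2), i.e. the Euclidean norm; the last coordinate x_n is snd. *)

definition Pn :: "((real^'m) \<times> real) set" where
  "Pn = {x. snd x > 0}"

definition Ln :: "((real^'m) \<times> real) set" where
  "Ln = {x. snd x = 0}"

definition Xn :: "((real^'m) \<times> real) set" where
  "Xn = Pn \<union> Ln"

definition tball :: "(real^'m) \<times> real \<Rightarrow> real \<Rightarrow> ((real^'m) \<times> real) set" where
  "tball a e = insert a (ball (fst a, e) e)"

definition basic_nbhd :: "((real^'m) \<times> real) set \<Rightarrow> (real^'m) \<times> real \<Rightarrow> ((real^'m) \<times> real) set \<Rightarrow> bool" where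
  "basic_nbhd A a N \<longleftrightarrow>
     (a \<in> Pn \<and> (\<exists>e. 0 < e \<and> e < snd a \<and> N = ball a e)) \<or>
     (a \<in> A \<and> (\<exists>e>0. N = ball a e \<inter> Xn)) \<or>
     (a \<in> Ln - A \<and> (\<exists>e>0. N = tball a e))"

definition tau :: "((real^'m) \<times> real) set \<Rightarrow> ((real^'m) \<times> real) topology" where
  "tau A = topology (\<lambda>U. U \<subseteq> Xn \<and> (\<forall>a\<in>U. \<exists>N. basic_nbhd A a N \<and> N \<subseteq> U))"

definition perfect_top :: "'a topology \<Rightarrow> bool" where
  "perfect_top X \<longleftrightarrow> (\<forall>C. closedin X C \<longrightarrow> gdelta_in X C)"

definition sigma_compact_top :: "'a topology \<Rightarrow> bool" where
  "sigma_compact_top X \<longleftrightarrow>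
     (\<exists>\<F>. countable \<F> \<and> (\<forall>K\<in>\<F>. compactin X K) \<and> \<Union>\<F> = topspace X)"

end

theory Submission
  imports Defs
begin

(* In tau(A) the points of A keep their Euclidean neighbourhoods, while each point a of Ln - A
   is cut off from the rest of Ln by the open tangent discs tball a e.  Hence:
   - A is closed in tau(A).  If it were a G-delta there, it would also be a G-delta of Ln in the
     Euclidean sense; a countable dense G-delta of Ln contradicts Baire's theorem, since Ln has
     no isolated points.
   - A Euclidean-closed subset of Ln disjoint from A is closed and discrete in tau(A).  For
     countable A a measure argument yields an uncountable such set, so tau(A) is not Lindelof.
   - If Ln - A is countable, a countable Euclidean base cut down to Xn together with the tangent
     discs of radius 1/(k+1) at the points of Ln - A is a base of tau(A).
   - A tau(A)-compact set is Euclidean compact, yet near a point of Ln - A it contains only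
     finitely many points of Ln.  If countably many such sets covered Xn, by Baire one of them
     would contain a relative ball of Ln; for dense Ln - A that ball contains a point of Ln - A
     together with infinitely many points of Ln close to it.
   The theorem is the case A = M for (1) and A = Ln - M for (2). *)

lemma finite_Union_Int_ball:
  fixes y :: "'a::metric_space"
  assumes "finite \<V>" "\<And>V. V \<in> \<V> \<Longrightarrow> (\<exists>r>0. V \<inter> ball y r = {}) \<or> (\<exists>a. V \<inter> S \<subseteq> {a})"
  shows "\<exists>r>0. finite (\<Union>\<V> \<inter> S \<inter> ball y r)"
  using assms
proof (induction rule: finite_induct)
  case empty
  show ?case by (intro exI[of _ 1]) simp
next
  case (insert V \<V>)
  then obtain r where r: "r > 0" "finite (\<Union>\<V> \<inter> S \<inter> ball y r)" by blast
  consider r' where "r' > 0" "V \<inter> ball y r' = {}" | a where "V \<inter> S \<subseteq> {a}"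
    using insert.prems by blast
  then show ?case
  proof cases
    case (1 r')
    have "\<Union>(insert V \<V>) \<inter> S \<inter> ball y (min r r') \<subseteq> \<Union>\<V> \<inter> S \<inter> ball y r"
      using 1 by auto
    then have "finite (\<Union>(insert V \<V>) \<inter> S \<inter> ball y (min r r'))"
      using r(2) by (rule finite_subset)
    then show ?thesis
      using r(1) 1(1) by (intro exI[of _ "min r r'"]) simp
  next
    case (2 a)
    have "\<Union>(insert V \<V>) \<inter> S \<inter> ball y r \<subseteq> insert a (\<Union>\<V> \<inter> S \<inter> ball y r)"
      using 2 by auto
    then show ?thesis
      using r finite_subset by blast
  qed
qed

lemma Baire_closed_cover:
  fixes S :: "'a::{real_normed_vector,heine_borel} set"
  assumes "closed S" "S \<noteq> {}" "countable \<K>" "\<And>K. K \<in> \<K> \<Longrightarrow> closed K" "S \<subseteq> \<Union>\<K>"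
  obtains K x e where "K \<in> \<K>" "x \<in> S" "e > 0" "S \<inter> ball x e \<subseteq> K"
proof -
  have "\<exists>K\<in>\<K>. \<not> S \<subseteq> closure (S - K)"
  proof (rule ccontr)
    assume dense: "\<not> (\<exists>K\<in>\<K>. \<not> S \<subseteq> closure (S - K))"
    let ?\<G> = "insert S ((\<lambda>K. S - K) ` \<K>)"
    have "S \<subseteq> closure (\<Inter>?\<G>)"
    proof (rule Baire[OF assms(1)])
      show "countable ?\<G>" using assms(3) by simp
      fix T assume "T \<in> ?\<G>"
      then consider "T = S" | K where "K \<in> \<K>" "T = S - K" by blast
      then show "openin (top_of_set S) T \<and> S \<subseteq> closure T"
      proof cases
        case 1
        then show ?thesis by (simp add: closure_subset)
      next
        case (2 K)
        then have "T = S \<inter> - K" by blast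
        then have "openin (top_of_set S) T"
          using assms(4)[OF \<open>K \<in> \<K>\<close>] by (simp add: openin_open_Int open_Compl)
        then show ?thesis using dense 2 by blast
      qed
    qed
    moreover have "\<Inter>?\<G> = {}" using assms(5) by blast
    ultimately show False using assms(2) by simp
  qed
  then obtain K x where "K \<in> \<K>" "x \<in> S" "x \<notin> closure (S - K)" by blast
  moreover from this obtain e where "e > 0" "\<forall>y\<in>S - K. \<not> dist y x < e"
    unfolding closure_approachable by blast
  moreover from this have "S \<inter> ball x e \<subseteq> K"
    by (auto simp: dist_commute)
  ultimately show thesis
    using that by blast
qed

lemma countable_dense_not_gdelta:
  fixes S :: "'a::{real_normed_vector,heine_borel} set"
  assumes "closed S" "S \<noteq> {}" "\<And>x. x \<in> S \<Longrightarrow> x islimpt S"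
    and "countable A" "A \<subseteq> S" "S \<subseteq> closure A"
    and "countable \<W>" "\<And>W. W \<in> \<W> \<Longrightarrow> open W"
  shows "S \<inter> \<Inter>\<W> \<noteq> A"
proof
  assume A: "S \<inter> \<Inter>\<W> = A"
  define \<K> where "\<K> = (\<lambda>W. S - W) ` \<W> \<union> (\<lambda>a. {a}) ` A"
  have "closed K" if "K \<in> \<K>" for K
  proof -
    from that consider W where "W \<in> \<W>" "K = S - W" | a where "K = {a}"
      unfolding \<K>_def by blast
    then show ?thesis
      by cases (use assms(1,8) in \<open>auto simp: Diff_eq\<close>)
  qed
  moreover have "S \<subseteq> \<Union>\<K>"
  proof
    fix x assume "x \<in> S"
    show "x \<in> \<Union>\<K>"
    proof (cases "x \<in> A")
      case True
      then have "{x} \<in> \<K>" by (simp add: \<K>_def)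
      then show ?thesis by blast
    next
      case False
      then obtain W where "W \<in> \<W>" "x \<notin> W"
        using A \<open>x \<in> S\<close> by blast
      then have "S - W \<in> \<K>" "x \<in> S - W"
        using \<open>x \<in> S\<close> by (auto simp: \<K>_def)
      then show ?thesis by blast
    qed
  qed
  moreover have "countable \<K>"
    using assms(4,7) by (simp add: \<K>_def)
  ultimately obtain K x e where K: "K \<in> \<K>" "x \<in> S" "e > 0" "S \<inter> ball x e \<subseteq> K"
    using Baire_closed_cover[OF assms(1,2)] by metis
  from K(1) consider W where "W \<in> \<W>" "K = S - W" | a where "K = {a}"
    unfolding \<K>_def by blast
  then show False
  proof cases
    case (1 W)
    obtain a where "a \<in> A" "dist a x < e"
      using assms(6) K(2,3) closure_approachable by blast
    then have "a \<in> S - W" using K(4) 1(2) assms(5) by (auto simp: dist_commute)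
    then show False using A 1(1) \<open>a \<in> A\<close> by blast
  next
    case (2 a)
    then have "finite (S \<inter> ball x e)"
      using K(4) finite_subset by blast
    then show False
      using assms(3)[OF K(2)] K(3) islimpt_eq_infinite_ball by blast
  qed
qed

lemma uncountable_closed_avoiding_countable:
  fixes C :: "'a::euclidean_space set"
  assumes "countable C"
  obtains T where "closed T" "T \<inter> C = {}" "uncountable T"
proof -
  have C: "C \<in> null_sets lborel"
    using assms by (rule countable_imp_null_set_lborel)
  then have "C \<in> sets borel" by auto
  then obtain U where U: "open U" "C \<subseteq> U" "emeasure lborel (U - C) < 1"
    using outer_regular_lborel[of C 1] by (metis ennreal_1 zero_less_one)
  have "emeasure lborel U = emeasure lborel ((U - C) \<union> C)"
    using U(2) by (simp add: Un_absorb2)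
  also have "\<dots> = emeasure lborel (U - C)"
    using U(1) C by (intro emeasure_Un_null_set) auto
  finally have U_small: "emeasure lborel U < 1" using U(3) by simp
  show thesis
  proof
    show "closed (cbox 0 One - U)" using U(1) by (intro closed_Diff closed_cbox)
    show "(cbox 0 One - U) \<inter> C = {}" using U(2) by blast
    show "uncountable (cbox 0 One - U)"
    proof
      assume "countable (cbox 0 One - U)"
      then have null: "cbox 0 One - U \<in> null_sets lborel"
        by (rule countable_imp_null_set_lborel)
      have "emeasure lborel (cbox (0::'a) One) \<le> emeasure lborel (U \<union> (cbox 0 One - U))"
        using U(1) null by (intro emeasure_mono) auto
      also have "\<dots> = emeasure lborel U"
        using U(1) null by (intro emeasure_Un_null_set) auto
      finally show False
        using U_small by (simp add: emeasure_lborel_cbox_eq)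
    qed
  qed
qed

lemma countable_closed_discrete_in_Lindelof_space:
  assumes "Lindelof_space X" "closedin X D" "\<And>x. x \<in> D \<Longrightarrow> \<exists>U. openin X U \<and> U \<inter> D = {x}"
  shows "countable D"
proof -
  have L: "Lindelof_space (subtopology X D)"
    using assms(1,2) by (rule Lindelof_space_closedin_subtopology)
  have "openin (subtopology X D) {x}" if "x \<in> D" for x
    using assms(3)[OF that] by (auto simp: openin_subtopology)
  moreover have "topspace (subtopology X D) = D"
    using assms(2) closedin_subset by auto
  ultimately obtain \<V> where "countable \<V>" "\<V> \<subseteq> (\<lambda>x. {x}) ` D" "\<Union>\<V> = D"
    using Lindelof_spaceD[OF L, of "(\<lambda>x. {x}) ` D"] by auto
  moreover have "countable V" if "V \<in> \<V>" for V
    using that \<open>\<V> \<subseteq> (\<lambda>x. {x}) ` D\<close> by auto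
  ultimately have "countable (\<Union>V\<in>\<V>. V)"
    by (intro countable_UN) auto
  then show ?thesis
    using \<open>\<Union>\<V> = D\<close> by simp
qed

lemma Pn_Int_Ln: "Pn \<inter> Ln = {}"
  by (auto simp: Pn_def Ln_def)

lemma closed_Ln: "closed Ln"
  unfolding Ln_def by (intro closed_Collect_eq continuous_intros)

lemma islimpt_Ln:
  assumes "x \<in> Ln" shows "x islimpt Ln"
proof (rule connected_imp_perfect[OF _ assms])
  have "Ln = {x. (0, 1) \<bullet> x = (0::real)}"
    by (auto simp: Ln_def inner_Pair_0)
  then have "convex Ln"
    using convex_hyperplane by metis
  then show "connected Ln"
    by (rule convex_connected)
  have "((0::real^'a), 0) \<in> Ln" "((1::real^'a), 0) \<in> Ln"
    by (simp_all add: Ln_def)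
  moreover have "(0::real^'a) \<noteq> 1" by (simp add: vec_eq_iff)
  ultimately show "Ln \<noteq> {c}" for c :: "(real^'a) \<times> real"
    by (metis prod.inject singletonD)
qed

lemma ball_subset_Pn: "e \<le> snd a \<Longrightarrow> ball a e \<subseteq> Pn"
proof
  fix y assume "e \<le> snd a" "y \<in> ball a e"
  then show "y \<in> Pn"
    using dist_snd_le[of a y] by (simp add: Pn_def dist_real_def)
qed

lemma in_tball_imp_snd_pos: "y \<in> tball a e \<Longrightarrow> y \<noteq> a \<Longrightarrow> snd y > 0"
  using dist_snd_le[of "(fst a, e)" y] by (auto simp: tball_def dist_real_def)

lemma tball_Int_Ln:
  assumes "a \<in> Ln" shows "tball a e \<inter> Ln = {a}"
proof
  show "tball a e \<inter> Ln \<subseteq> {a}"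
  proof
    fix y assume "y \<in> tball a e \<inter> Ln"
    then have "y \<in> tball a e" "snd y = 0" by (simp_all add: Ln_def)
    then show "y \<in> {a}"
      using in_tball_imp_snd_pos[of y a e] by (cases "y = a") auto
  qed
  show "{a} \<subseteq> tball a e \<inter> Ln"
    using assms by (simp add: tball_def)
qed

lemma tball_subset_Xn: "a \<in> Ln \<Longrightarrow> tball a e \<subseteq> Xn"
  using in_tball_imp_snd_pos[of _ a e] by (auto simp: Xn_def Pn_def)

lemma tball_mono:
  assumes "e \<le> e'" shows "tball a e \<subseteq> tball a e'"
proof -
  have "dist (fst a, e) (fst a, e') = e' - e"
    using assms by (simp add: dist_Pair_Pair dist_real_def)
  then have "ball (fst a, e) e \<subseteq> ball (fst a, e') e'"
    by (intro ball_subset_ball_iff[THEN iffD2]) auto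
  then show ?thesis by (auto simp: tball_def)
qed

lemma tball_subset_ball:
  assumes "a \<in> Ln" "e > 0" shows "tball a e \<subseteq> ball a (2 * e)"
proof -
  have "dist (fst a, e) a = e"
    using assms by (cases a) (simp add: Ln_def dist_Pair_Pair dist_real_def)
  then have "ball (fst a, e) e \<subseteq> ball a (2 * e)"
    by (intro ball_subset_ball_iff[THEN iffD2]) auto
  then show ?thesis
    using assms(2) by (simp add: tball_def)
qed

lemma basic_nbhd_Pn:
  "A \<subseteq> Ln \<Longrightarrow> a \<in> Pn \<Longrightarrow> basic_nbhd A a N \<longleftrightarrow> (\<exists>e. 0 < e \<and> e < snd a \<and> N = ball a e)"
  unfolding basic_nbhd_def using Pn_Int_Ln by blast

lemma basic_nbhd_A:
  "A \<subseteq> Ln \<Longrightarrow> a \<in> A \<Longrightarrow> basic_nbhd A a N \<longleftrightarrow> (\<exists>e>0. N = ball a e \<inter> Xn)"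
  unfolding basic_nbhd_def using Pn_Int_Ln by blast

lemma basic_nbhd_Ln_Diff:
  "a \<in> Ln - A \<Longrightarrow> basic_nbhd A a N \<longleftrightarrow> (\<exists>e>0. N = tball a e)"
  unfolding basic_nbhd_def using Pn_Int_Ln by blast

lemma basic_nbhd_Pn_subset:
  assumes "A \<subseteq> Ln" "a \<in> Pn" "e > 0"
  shows "\<exists>N. basic_nbhd A a N \<and> N \<subseteq> ball a e \<inter> Xn"
proof -
  define r where "r = min e (snd a) / 2"
  have "ball a r \<subseteq> Pn"
    using ball_subset_Pn[of r a] assms(2) by (simp add: r_def Pn_def)
  moreover have "ball a r \<subseteq> ball a e"
    using assms(2,3) by (intro subset_ball) (simp add: r_def Pn_def)
  moreover have "0 < r" "r < snd a"
    using assms(2,3) by (auto simp: r_def Pn_def)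
  ultimately show ?thesis
    using basic_nbhd_Pn[OF assms(1,2)] by (auto simp: Xn_def)
qed

lemma basic_nbhd_chain:
  assumes "A \<subseteq> Ln" "basic_nbhd A a N" "basic_nbhd A a N'"
  shows "N \<subseteq> N' \<or> N' \<subseteq> N"
proof -
  consider "a \<in> Pn" | "a \<in> A" | "a \<in> Ln - A"
    using assms(2) unfolding basic_nbhd_def by blast
  then show ?thesis
  proof cases
    case 1
    then obtain e e' where "N = ball a e" "N' = ball a e'"
      using assms basic_nbhd_Pn by metis
    then show ?thesis by (metis linear subset_ball)
  next
    case 2
    then obtain e e' where "N = ball a e \<inter> Xn" "N' = ball a e' \<inter> Xn"
      using assms basic_nbhd_A by metis
    then show ?thesis by (metis Int_mono linear subset_ball subset_refl)
  next
    case 3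
    then obtain e e' where "N = tball a e" "N' = tball a e'"
      using assms basic_nbhd_Ln_Diff by metis
    then show ?thesis by (metis linear tball_mono)
  qed
qed

lemma istopology_tau:
  assumes "A \<subseteq> Ln"
  shows "istopology (\<lambda>U. U \<subseteq> Xn \<and> (\<forall>a\<in>U. \<exists>N. basic_nbhd A a N \<and> N \<subseteq> U))"
  unfolding istopology_def
proof (rule conjI; intro allI impI)
  fix S T :: "((real^'a) \<times> real) set"
  assume S: "S \<subseteq> Xn \<and> (\<forall>a\<in>S. \<exists>N. basic_nbhd A a N \<and> N \<subseteq> S)"
    and T: "T \<subseteq> Xn \<and> (\<forall>a\<in>T. \<exists>N. basic_nbhd A a N \<and> N \<subseteq> T)"
  moreover have "\<exists>N. basic_nbhd A a N \<and> N \<subseteq> S \<inter> T" if "a \<in> S" "a \<in> T" for a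
  proof -
    obtain N N' where "basic_nbhd A a N" "N \<subseteq> S" "basic_nbhd A a N'" "N' \<subseteq> T"
      using \<open>a \<in> S\<close> \<open>a \<in> T\<close> S T by blast
    then show ?thesis
      using basic_nbhd_chain[OF assms, of a N N'] by blast
  qed
  ultimately show "S \<inter> T \<subseteq> Xn \<and> (\<forall>a\<in>S \<inter> T. \<exists>N. basic_nbhd A a N \<and> N \<subseteq> S \<inter> T)"
    by blast
next
  fix \<K> :: "((real^'a) \<times> real) set set"
  assume \<K>: "\<forall>S\<in>\<K>. S \<subseteq> Xn \<and> (\<forall>a\<in>S. \<exists>N. basic_nbhd A a N \<and> N \<subseteq> S)"
  show "\<Union>\<K> \<subseteq> Xn \<and> (\<forall>a\<in>\<Union>\<K>. \<exists>N. basic_nbhd A a N \<and> N \<subseteq> \<Union>\<K>)"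
  proof (intro conjI ballI)
    show "\<Union>\<K> \<subseteq> Xn" using \<K> by blast
    fix a assume "a \<in> \<Union>\<K>"
    then obtain S where "S \<in> \<K>" "a \<in> S" by blast
    moreover from this obtain N where "basic_nbhd A a N" "N \<subseteq> S" using \<K> by blast
    ultimately show "\<exists>N. basic_nbhd A a N \<and> N \<subseteq> \<Union>\<K>" by blast
  qed
qed

lemma openin_tau:
  assumes "A \<subseteq> Ln"
  shows "openin (tau A) U \<longleftrightarrow> U \<subseteq> Xn \<and> (\<forall>a\<in>U. \<exists>N. basic_nbhd A a N \<and> N \<subseteq> U)"
  by (simp add: tau_def topology_inverse'[OF istopology_tau[OF assms]])

lemma openin_tau_iff_balls:
  assumes "A \<subseteq> Ln"
  shows "openin (tau A) U \<longleftrightarrow> U \<subseteq> Xn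
    \<and> (\<forall>a\<in>U \<inter> (Ln - A). \<exists>e>0. tball a e \<subseteq> U)
    \<and> (\<forall>a\<in>U - (Ln - A). \<exists>e>0. ball a e \<inter> Xn \<subseteq> U)"
proof (intro iffI conjI ballI)
  assume "openin (tau A) U"
  then have U: "U \<subseteq> Xn" "\<And>a. a \<in> U \<Longrightarrow> \<exists>N. basic_nbhd A a N \<and> N \<subseteq> U"
    by (auto simp: openin_tau[OF assms])
  then show "U \<subseteq> Xn" by blast
  fix a
  show "\<exists>e>0. tball a e \<subseteq> U" if a: "a \<in> U \<inter> (Ln - A)"
  proof -
    obtain N where "basic_nbhd A a N" "N \<subseteq> U" using U(2) a by blast
    moreover have "a \<in> Ln - A" using a by blast
    ultimately show ?thesis using basic_nbhd_Ln_Diff[of a A N] by blast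
  qed
  show "\<exists>e>0. ball a e \<inter> Xn \<subseteq> U" if a: "a \<in> U - (Ln - A)"
  proof -
    obtain N where N: "basic_nbhd A a N" "N \<subseteq> U" using U(2) a by blast
    consider "a \<in> Pn" | "a \<in> A" using a U(1) unfolding Xn_def by blast
    then show ?thesis
    proof cases
      case 1
      then show ?thesis using N basic_nbhd_Pn[OF assms 1, of N] by blast
    next
      case 2
      then show ?thesis using N basic_nbhd_A[OF assms 2, of N] by blast
    qed
  qed
next
  assume R: "U \<subseteq> Xn
    \<and> (\<forall>a\<in>U \<inter> (Ln - A). \<exists>e>0. tball a e \<subseteq> U)
    \<and> (\<forall>a\<in>U - (Ln - A). \<exists>e>0. ball a e \<inter> Xn \<subseteq> U)"
  have "\<exists>N. basic_nbhd A a N \<and> N \<subseteq> U" if a: "a \<in> U" for a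
  proof -
    consider "a \<in> Ln - A" | "a \<in> A" | "a \<in> Pn" using a R unfolding Xn_def by blast
    then show ?thesis
    proof cases
      case 1
      then obtain e where "e > 0" "tball a e \<subseteq> U" using R a by blast
      then show ?thesis using basic_nbhd_Ln_Diff[OF 1] by blast
    next
      case 2
      then have "a \<notin> Ln - A" by blast
      then obtain e where "e > 0" "ball a e \<inter> Xn \<subseteq> U" using R a by blast
      then show ?thesis using basic_nbhd_A[OF assms 2] by blast
    next
      case 3
      then have "a \<notin> Ln - A" using Pn_Int_Ln by blast
      then obtain e where "e > 0" "ball a e \<inter> Xn \<subseteq> U" using R a by blast
      then show ?thesis using basic_nbhd_Pn_subset[OF assms 3] by blast
    qed
  qed
  then show "openin (tau A) U"
    using R by (simp add: openin_tau[OF assms])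
qed

lemma openin_tau_Int_Xn:
  assumes "A \<subseteq> Ln" "open C"
  shows "openin (tau A) (C \<inter> Xn)"
  unfolding openin_tau_iff_balls[OF assms(1)]
proof (intro conjI ballI)
  fix a assume "a \<in> C \<inter> Xn \<inter> (Ln - A)"
  moreover obtain e where "e > 0" "ball a e \<subseteq> C"
    using assms(2) calculation open_contains_ball by blast
  ultimately have "tball a (e / 2) \<subseteq> C \<inter> Xn"
    using tball_subset_ball[of a "e / 2"] tball_subset_Xn[of a] by auto
  then show "\<exists>e>0. tball a e \<subseteq> C \<inter> Xn"
    using \<open>e > 0\<close> by (intro exI[of _ "e / 2"]) simp
next
  fix a assume "a \<in> C \<inter> Xn - (Ln - A)"
  then obtain e where "e > 0" "ball a e \<subseteq> C"
    using assms(2) open_contains_ball by blast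
  then show "\<exists>e>0. ball a e \<inter> Xn \<subseteq> C \<inter> Xn" by blast
qed auto

lemma topspace_tau:
  assumes "A \<subseteq> Ln" shows "topspace (tau A) = Xn"
proof
  show "topspace (tau A) \<subseteq> Xn"
    using openin_topspace[of "tau A"] unfolding openin_tau_iff_balls[OF assms] by blast
  have "openin (tau A) Xn"
    using openin_tau_Int_Xn[OF assms open_UNIV] by simp
  then show "Xn \<subseteq> topspace (tau A)"
    by (rule openin_subset)
qed

lemma openin_tau_tball:
  assumes "A \<subseteq> Ln" "a \<in> Ln - A" "e > 0"
  shows "openin (tau A) (tball a e)"
  unfolding openin_tau_iff_balls[OF assms(1)]
proof (intro conjI ballI)
  show "tball a e \<subseteq> Xn"
    using assms(2) tball_subset_Xn by blast
  fix y assume y: "y \<in> tball a e - (Ln - A)"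
  then have "y \<noteq> a" using assms(2) by blast
  then have "dist y (fst a, e) < e"
    using y by (auto simp: tball_def dist_commute)
  then have "ball y (e - dist y (fst a, e)) \<subseteq> ball (fst a, e) e"
    by (intro ball_subset_ball_iff[THEN iffD2]) (simp add: dist_commute)
  then show "\<exists>r>0. ball y r \<inter> Xn \<subseteq> tball a e"
    using \<open>dist y (fst a, e) < e\<close> by (intro exI[of _ "e - dist y (fst a, e)"]) (auto simp: tball_def)
next
  fix y assume "y \<in> tball a e \<inter> (Ln - A)"
  then have "y = a" using tball_Int_Ln[of a e] assms(2) by blast
  then show "\<exists>r>0. tball y r \<subseteq> tball a e"
    using assms(3) by blast
qed

lemma closedin_tau:
  assumes "A \<subseteq> Ln" "S \<subseteq> Ln" "A \<inter> closure S \<subseteq> S"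
  shows "closedin (tau A) S"
  unfolding closedin_def topspace_tau[OF assms(1)] openin_tau_iff_balls[OF assms(1)]
proof (intro conjI ballI)
  show "S \<subseteq> Xn" using assms(2) unfolding Xn_def by blast
  fix a assume a: "a \<in> (Xn - S) \<inter> (Ln - A)"
  then have "tball a 1 \<inter> S = {}"
    using tball_Int_Ln[of a 1] assms(2) by auto
  then have "tball a 1 \<subseteq> Xn - S"
    using tball_subset_Xn[of a 1] a by blast
  then show "\<exists>e>0. tball a e \<subseteq> Xn - S" by (intro exI[of _ 1]) simp
next
  fix a assume a: "a \<in> Xn - S - (Ln - A)"
  have "closure S \<subseteq> Ln"
    using assms(2) closed_Ln by (rule closure_minimal)
  then have "a \<notin> closure S"
    using a assms(3) by blast
  then obtain e where "e > 0" "ball a e \<subseteq> - closure S"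
    using open_contains_ball_eq[OF open_Compl[OF closed_closure[of S]], of a] by blast
  then have "ball a e \<inter> S = {}"
    using closure_subset by blast
  then show "\<exists>e>0. ball a e \<inter> Xn \<subseteq> Xn - S"
    using \<open>e > 0\<close> by blast
qed blast

lemma openin_tau_obtain_open:
  assumes "A \<subseteq> Ln" "openin (tau A) U"
  obtains V where "open V" "U - (Ln - A) \<subseteq> V" "V \<inter> Xn \<subseteq> U"
proof
  let ?V = "\<Union>{ball a e |a e. ball a e \<inter> Xn \<subseteq> U}"
  show "open ?V" by (intro open_Union) auto
  show "U - (Ln - A) \<subseteq> ?V"
  proof
    fix a assume "a \<in> U - (Ln - A)"
    then obtain e where "e > 0" "ball a e \<inter> Xn \<subseteq> U"
      using assms(2) unfolding openin_tau_iff_balls[OF assms(1)] by blast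
    moreover have "a \<in> ball a e" using \<open>e > 0\<close> by simp
    ultimately show "a \<in> ?V" by blast
  qed
  show "?V \<inter> Xn \<subseteq> U" by blast
qed

lemma continuous_map_tau_id:
  assumes "A \<subseteq> Ln" shows "continuous_map (tau A) (top_of_set Xn) id"
  unfolding continuous_map_def topspace_tau[OF assms]
proof (intro conjI allI impI)
  fix U :: "((real^'a) \<times> real) set"
  assume "openin (top_of_set Xn) U"
  then obtain C where "open C" "U = Xn \<inter> C"
    by (auto simp: openin_open)
  then have "{x \<in> Xn. id x \<in> U} = C \<inter> Xn" by auto
  then show "openin (tau A) {x \<in> Xn. id x \<in> U}"
    using openin_tau_Int_Xn[OF assms \<open>open C\<close>] by simp
qed auto

lemma compactin_tau_imp_compact:
  assumes "A \<subseteq> Ln" "compactin (tau A) K"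
  shows "compact K"
  using image_compactin[OF assms(2) continuous_map_tau_id[OF assms(1)]]
  by (simp add: compactin_subtopology)

lemma compactin_tau_finite_near:
  assumes "A \<subseteq> Ln" "compactin (tau A) K" "y \<in> Ln - A"
  obtains r where "r > 0" "finite (K \<inter> Ln \<inter> ball y r)"
proof -
  define \<U> where "\<U> = {Xn - cball y r |r. r > 0} \<union> (\<lambda>a. tball a 1) ` (Ln - A)"
  have "openin (tau A) (Xn - cball y r)" for r
  proof -
    have "Xn - cball y r = - cball y r \<inter> Xn" by blast
    then show ?thesis
      using openin_tau_Int_Xn[OF assms(1)] by (simp add: open_Compl)
  qed
  then have \<U>_open: "\<forall>U\<in>\<U>. openin (tau A) U"
    using openin_tau_tball[OF assms(1) _ zero_less_one] unfolding \<U>_def by blast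
  have \<U>_cover: "K \<subseteq> \<Union>\<U>"
  proof
    fix z assume "z \<in> K"
    then have "z \<in> Xn"
      using assms(1,2) compactin_subset_topspace topspace_tau by blast
    show "z \<in> \<Union>\<U>"
    proof (cases "z = y")
      case True
      have "tball y 1 \<in> \<U>" using assms(3) unfolding \<U>_def by blast
      moreover have "y \<in> tball y 1" by (simp add: tball_def)
      ultimately show ?thesis using True by blast
    next
      case False
      then have "Xn - cball y (dist y z / 2) \<in> \<U>"
        unfolding \<U>_def by auto
      moreover have "z \<in> Xn - cball y (dist y z / 2)"
        using \<open>z \<in> Xn\<close> False by simp
      ultimately show ?thesis by blast
    qed
  qed
  obtain \<V> where \<V>: "finite \<V>" "\<V> \<subseteq> \<U>" "K \<subseteq> \<Union>\<V>"
    using assms(2) \<U>_open \<U>_cover unfolding compactin_def by blast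
  have "(\<exists>r>0. V \<inter> ball y r = {}) \<or> (\<exists>a. V \<inter> Ln \<subseteq> {a})" if V: "V \<in> \<U>" for V
  proof -
    consider r where "r > 0" "V = Xn - cball y r" | a where "a \<in> Ln - A" "V = tball a 1"
      using V unfolding \<U>_def by blast
    then show ?thesis
    proof cases
      case (1 r)
      then have "V \<inter> ball y r = {}" by auto
      then show ?thesis using 1 by blast
    next
      case (2 a)
      then have "V \<inter> Ln \<subseteq> {a}" using tball_Int_Ln[of a 1] by blast
      then show ?thesis by blast
    qed
  qed
  then obtain r where "r > 0" "finite (\<Union>\<V> \<inter> Ln \<inter> ball y r)"
    using finite_Union_Int_ball[of \<V> y Ln] \<V>(1,2) by blast
  moreover have "K \<inter> Ln \<inter> ball y r \<subseteq> \<Union>\<V> \<inter> Ln \<inter> ball y r"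
    using \<V>(3) by blast
  ultimately show thesis
    using that finite_subset by blast
qed

lemma gdelta_in_tau_imp_gdelta:
  assumes "A \<subseteq> Ln" "gdelta_in (tau A) A"
  obtains \<W> where "countable \<W>" "\<And>W. W \<in> \<W> \<Longrightarrow> open W" "Ln \<inter> \<Inter>\<W> = A"
proof -
  obtain \<U> where \<U>: "countable \<U>" "\<forall>U\<in>\<U>. openin (tau A) U" "Xn \<inter> \<Inter>\<U> = A"
    using assms(2)
    unfolding gdelta_in_def relative_to_def intersection_of_def topspace_tau[OF assms(1)] by blast
  have "\<forall>U\<in>\<U>. \<exists>W. open W \<and> A \<subseteq> W \<and> W \<inter> Xn \<subseteq> U"
  proof
    fix U assume "U \<in> \<U>"
    then have "A \<subseteq> U - (Ln - A)" using \<U>(3) by blast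
    then show "\<exists>W. open W \<and> A \<subseteq> W \<and> W \<inter> Xn \<subseteq> U"
      using openin_tau_obtain_open[OF assms(1)] \<U>(2) \<open>U \<in> \<U>\<close> by (metis subset_trans)
  qed
  then obtain W where W: "\<And>U. U \<in> \<U> \<Longrightarrow> open (W U) \<and> A \<subseteq> W U \<and> W U \<inter> Xn \<subseteq> U"
    by metis
  show thesis
  proof
    show "countable (W ` \<U>)" using \<U>(1) by simp
    show "open V" if "V \<in> W ` \<U>" for V using that W by blast
    have "Ln \<inter> \<Inter>(W ` \<U>) \<subseteq> Xn \<inter> \<Inter>\<U>"
      using W by (auto simp: Xn_def)
    moreover have "A \<subseteq> Ln \<inter> \<Inter>(W ` \<U>)"
      using W assms(1) by blast
    ultimately show "Ln \<inter> \<Inter>(W ` \<U>) = A"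
      using \<U>(3) by (metis subset_antisym)
  qed
qed

lemma not_perfect_top_tau:
  assumes "A \<subseteq> Ln" "countable A" "Ln \<subseteq> closure A"
  shows "\<not> perfect_top (tau A)"
proof
  assume "perfect_top (tau A)"
  then have "gdelta_in (tau A) A"
    using closedin_tau[OF assms(1) assms(1)] unfolding perfect_top_def by blast
  then obtain \<W> where "countable \<W>" "\<And>W. W \<in> \<W> \<Longrightarrow> open W" "Ln \<inter> \<Inter>\<W> = A"
    using gdelta_in_tau_imp_gdelta[OF assms(1)] by blast
  moreover have "Ln \<noteq> {}" by (auto simp: Ln_def)
  ultimately show False
    using countable_dense_not_gdelta[OF closed_Ln _ islimpt_Ln assms(2,1,3)] by blast
qed

lemma not_Lindelof_space_tau:
  assumes "A \<subseteq> Ln" "countable A"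
  shows "\<not> Lindelof_space (tau A)"
proof
  assume Lindelof: "Lindelof_space (tau A)"
  obtain T where T: "closed T" "T \<inter> fst ` A = {}" "uncountable T"
    using uncountable_closed_avoiding_countable assms(2) by (metis countable_image)
  define D where "D = T \<times> {0::real}"
  have "D \<subseteq> Ln"
    by (auto simp: D_def Ln_def)
  have "D \<inter> A = {}"
  proof -
    have "(t, 0) \<notin> A" if "t \<in> T" for t
      using that T(2) by (metis IntI emptyE fst_conv image_eqI)
    then show ?thesis by (auto simp: D_def)
  qed
  have "closed D"
    using T(1) by (simp add: D_def closed_Times)
  then have "closedin (tau A) D"
    using closedin_tau[OF assms(1) \<open>D \<subseteq> Ln\<close>] \<open>D \<inter> A = {}\<close> by simp
  moreover have "\<exists>U. openin (tau A) U \<and> U \<inter> D = {d}" if "d \<in> D" for d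
  proof -
    have "d \<in> Ln - A" using that \<open>D \<subseteq> Ln\<close> \<open>D \<inter> A = {}\<close> by blast
    then have "openin (tau A) (tball d 1)" "tball d 1 \<inter> D = {d}"
      using openin_tau_tball[OF assms(1)] tball_Int_Ln[of d 1] \<open>D \<subseteq> Ln\<close> that by auto
    then show ?thesis by blast
  qed
  ultimately have "countable D"
    using countable_closed_discrete_in_Lindelof_space[OF Lindelof] by blast
  then have "countable (fst ` D)" by simp
  moreover have "fst ` D = T" by (simp add: D_def)
  ultimately show False using T(3) by simp
qed

lemma second_countable_tau:
  assumes "A \<subseteq> Ln" "countable (Ln - A)"
  shows "second_countable (tau A)"
proof -
  obtain \<B> :: "((real^'a) \<times> real) set set" where \<B>: "countable \<B>" "topological_basis \<B>"
    using ex_countable_basis by blast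
  define \<C> where "\<C> = (\<lambda>C. C \<inter> Xn) ` \<B> \<union> (\<lambda>(a, k). tball a (1 / Suc k)) ` ((Ln - A) \<times> (UNIV :: nat set))"
  have "countable \<C>" using \<B>(1) assms(2) by (simp add: \<C>_def)
  moreover have "\<forall>V\<in>\<C>. openin (tau A) V"
    using openin_tau_Int_Xn[OF assms(1)] openin_tau_tball[OF assms(1)] topological_basis_open[OF \<B>(2)]
    by (auto simp: \<C>_def)
  moreover have "\<exists>V\<in>\<C>. x \<in> V \<and> V \<subseteq> U" if U: "openin (tau A) U" "x \<in> U" for U x
  proof (cases "x \<in> Ln - A")
    case True
    then obtain e where "e > 0" "tball x e \<subseteq> U"
      using U unfolding openin_tau_iff_balls[OF assms(1)] by blast
    moreover obtain k where "inverse (real (Suc k)) < e"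
      using reals_Archimedean \<open>e > 0\<close> by blast
    ultimately have "tball x (1 / Suc k) \<subseteq> U"
      using tball_mono[of "1 / Suc k" e x] by (simp add: field_simps)
    moreover have "tball x (1 / Suc k) \<in> \<C>"
      using True unfolding \<C>_def by force
    ultimately show ?thesis
      by (auto simp: tball_def)
  next
    case False
    then obtain e where "e > 0" "ball x e \<inter> Xn \<subseteq> U"
      using U unfolding openin_tau_iff_balls[OF assms(1)] by blast
    moreover obtain C where "C \<in> \<B>" "x \<in> C" "C \<subseteq> ball x e"
      using topological_basisE[OF \<B>(2), of "ball x e" x] \<open>e > 0\<close> by auto
    moreover have "x \<in> Xn"
      using U openin_subset topspace_tau[OF assms(1)] by blast
    ultimately show ?thesis
      unfolding \<C>_def by blast
  qed
  ultimately show ?thesis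
    unfolding second_countable_def by blast
qed

lemma not_sigma_compact_top_tau:
  assumes "A \<subseteq> Ln" "Ln \<subseteq> closure (Ln - A)"
  shows "\<not> sigma_compact_top (tau A)"
proof
  assume "sigma_compact_top (tau A)"
  then obtain \<F> where \<F>: "countable \<F>" "\<forall>K\<in>\<F>. compactin (tau A) K" "\<Union>\<F> = Xn"
    unfolding sigma_compact_top_def topspace_tau[OF assms(1)] by blast
  have "closed K" if "K \<in> \<F>" for K
    using \<F>(2) that compactin_tau_imp_compact[OF assms(1)] compact_imp_closed by blast
  moreover have "Ln \<subseteq> \<Union>\<F>" "Ln \<noteq> {}"
    using \<F>(3) by (auto simp: Xn_def Ln_def)
  ultimately obtain K x e where K: "K \<in> \<F>" "x \<in> Ln" "e > 0" "Ln \<inter> ball x e \<subseteq> K"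
    using Baire_closed_cover[OF closed_Ln _ \<F>(1)] by metis
  obtain y where y: "y \<in> Ln - A" "dist y x < e"
    using assms(2) K(2,3) closure_approachable by blast
  obtain r where r: "r > 0" "finite (K \<inter> Ln \<inter> ball y r)"
    using compactin_tau_finite_near[OF assms(1) _ y(1)] \<F>(2) K(1) by blast
  define s where "s = min r (e - dist y x)"
  have "ball y s \<subseteq> ball x e"
    by (intro ball_subset_ball_iff[THEN iffD2]) (auto simp: s_def dist_commute min_def)
  moreover have "ball y s \<subseteq> ball y r"
    by (simp add: s_def subset_ball)
  ultimately have "Ln \<inter> ball y s \<subseteq> K \<inter> Ln \<inter> ball y r"
    using K(4) by blast
  then have "finite (Ln \<inter> ball y s)"
    using r(2) finite_subset by blast
  moreover have "s > 0" using r(1) y(2) by (simp add: s_def)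
  ultimately show False
    using islimpt_Ln[of y] y(1) islimpt_eq_infinite_ball by blast
qed

theorem mainTheorem16:
  fixes M :: "((real^'m) \<times> real) set"
  assumes "countable M" and "M \<subseteq> Ln"
    and "(subtopology euclidean Ln) closure_of M = Ln"
  shows "\<not> perfect_top (tau M) \<and> \<not> Lindelof_space (tau M)
     \<and> second_countable (tau (Ln - M)) \<and> \<not> sigma_compact_top (tau (Ln - M))"
proof -
  have "Ln \<subseteq> closure M"
    using assms(3) closure_of_subtopology[of euclidean Ln M] closure_mono[of "Ln \<inter> M" M] by auto
  moreover have "Ln - (Ln - M) = M"
    using assms(2) by blast
  ultimately show ?thesis
    using not_perfect_top_tau[OF assms(2,1)] not_Lindelof_space_tau[OF assms(2,1)]
      second_countable_tau[of "Ln - M"] not_sigma_compact_top_tau[of "Ln - M"] assms(1)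
    by auto
qed

end
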